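(* Let $n\ge2$ and let $U^+$ be the subalgebra of $U_{r,s}(\mathfrak{so}_{2n+1})$ generated by $e_1,\dots,e_n$, with root vectors as in the context. Then in $U^+$: (1) $e_i\mathcal E_{i,j}=s^2\mathcal E_{i,j}e_i$ for $1\le i<j\le n$; (2) $e_i\mathcal E_{i,j'}=s^2\mathcal E_{i,j'}e_i$ for $i+1<j\le n$; (3) $\mathcal E_{i,j}e_j=s^2e_j\mathcal E_{i,j}$ for $1\le i<j<n$; (4) $\mathcal E_{i,n'}e_n=s^2e_n\mathcal E_{i,n'}$ for $1\le i<n$; (5) $\mathcal E_{i,j'}e_j=r^{-2}e_j\mathcal E_{i,j'}$ for $1\le i<j<n$.
   Context: Let $r,s\in\mathbb C^*$ with $r^3\ne s^3$, $r^4\ne s^4$, $\mathbb K=\mathbb Q(r,s)$. $U_{r,s}(\mathfrak{so}_{2n+1})$ is the $\mathbb K$-algebra generated by $e_i,f_i,\omega_i^{\pm1},\omega_i'^{\pm1}$ ($1\le i\le n$) with: $\omega$'s commute, invertible; $\omega_je_i\omega_j^{-1}=\langle\omega_i',\omega_j\rangle e_i$, $\omega_jf_i\omega_j^{-1}=\langle\omega_i',\omega_j\rangle^{-1}f_i$, $\omega_j'e_i\omega_j'^{-1}=\langle\omega_j',\omega_i\rangle^{-1}e_i$, $\omega_j'f_i\omega_j'^{-1}=\langle\omega_j',\omega_i\rangle f_i$, where $\langle\omega_i',\omega_i\rangle=r^2s^{-2}$ ($i<n$), $\langle\omega_n',\omega_n\rangle=rs^{-1}$, $\langle\omega_i',\omega_{i+1}\rangle=r^{-2}$,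 $\langle\omega_{i+1}',\omega_i\rangle=s^2$ ($i<n$), others $1$; $e_if_j-f_je_i=\delta_{ij}(\omega_i-\omega_i')/(r_i-s_i)$ ($r_i=r^2,s_i=s^2$ for $i<n$; $r_n=r,s_n=s$); Serre relations $(\mathrm{ad}_le_i)^{1-a_{ij}}(e_j)=0=(\mathrm{ad}_rf_i)^{1-a_{ij}}(f_j)$, $i\ne j$, with $(a_{ij})$ the $B_n$ Cartan matrix ($a_{ii}=2$, $a_{i,i+1}=a_{i+1,i}=-1$ for $i\le n-2$, $a_{n-1,n}=-1$, $a_{n,n-1}=-2$, else $0$), $\mathrm{ad}_l(a)(b)=\sum a_{(1)}bS(a_{(2)})$, $\mathrm{ad}_r(a)(b)=\sum S(a_{(1)})ba_{(2)}$, for the Hopf structure $\Delta(\omega)=\omega\otimes\omega$, $\Delta(e_i)=e_i\otimes1+\omega_i\otimes e_i$, $\Delta(f_i)=1\otimes f_i+f_i\otimes\omega_i'$, $S(e_i)=-\omega_i^{-1}e_i$, $S(f_i)=-f_i\omega_i'^{-1}$. Root vectors: $\mathcal E_{i,i}=e_i$, $\mathcal E_{i,j}=e_i\mathcal E_{i+1,j}-r^2\mathcal E_{i+1,j}e_i$ ($1\le i<j\le n$), $\mathcal E_{i,n'}=\mathcal E_{i,n}e_n-rs\,e_n\mathcal E_{i,n}$ ($i\le n-1$), $\mathcal E_{i,j'}=\mathcal E_{i,(j+1)'}e_j-s^{-2}e_j\mathcal E_{i,(j+1)'}$ ($1\le i<j\le n-1$). *)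

theory Defs
  imports Complex_Main
begin

text \<open>A statement "identity X holds in U" is rendered as: X holds for every family of elements
  of every associative unital algebra over the complex numbers (scalars given by a central
  ring homomorphism c) satisfying all defining relations of U.  Since U_{r,s} is defined
  over K = Q(r,s) subset C and U is a subalgebra of its scalar extension to C, this is
  equivalent to the identity holding in U (and hence in U^+).\<close>

text \<open>Structure constants: pairing i j stands for the value of the pairing of omega'_i with omega_j.\<close>
definition pairing :: "nat \<Rightarrow> complex \<Rightarrow> complex \<Rightarrow> nat \<Rightarrow> nat \<Rightarrow> complex" where
  "pairing n r s i j =
     (if i = j then (if i < n then r^2 * inverse (s^2) else r * inverse s)
      else if j = i + 1 \<and> i < n then inverse (r^2)
      else if i = j + 1 \<and> j < n then s^2
      else 1)"

definition r_idx :: "nat \<Rightarrow> complex \<Rightarrow> nat \<Rightarrow> complex" where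
  "r_idx n r i = (if i < n then r^2 else r)"

definition cartanB :: "nat \<Rightarrow> nat \<Rightarrow> nat \<Rightarrow> int" where
  "cartanB n i j =
     (if i = j then 2
      else if (j = i + 1 \<and> i \<le> n - 2) \<or> (i = j + 1 \<and> j \<le> n - 2) then -1
      else if i = n - 1 \<and> j = n then -1
      else if i = n \<and> j = n - 1 then -2
      else 0)"

text \<open>Left adjoint action of e_i: ad_l(e_i)(b) = e_i b + omega_i b S(e_i) = e_i b - omega_i b omega_i^{-1} e_i.\<close>
definition adl :: "(nat \<Rightarrow> 'a::ring_1) \<Rightarrow> (nat \<Rightarrow> 'a) \<Rightarrow> (nat \<Rightarrow> 'a) \<Rightarrow> nat \<Rightarrow> 'a \<Rightarrow> 'a" where
  "adl e w wI i b = e i * b - w i * b * wI i * e i"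

text \<open>Right adjoint action of f_i: ad_r(f_i)(b) = S(1) b f_i + S(f_i) b omega'_i = b f_i - f_i omega'_i^{-1} b omega'_i.\<close>
definition adr :: "(nat \<Rightarrow> 'a::ring_1) \<Rightarrow> (nat \<Rightarrow> 'a) \<Rightarrow> (nat \<Rightarrow> 'a) \<Rightarrow> nat \<Rightarrow> 'a \<Rightarrow> 'a" where
  "adr f w' wI' i b = b * f i - f i * wI' i * b * w' i"

definition is_Urs_rep ::
  "nat \<Rightarrow> complex \<Rightarrow> complex \<Rightarrow> (complex \<Rightarrow> 'a::ring_1) \<Rightarrow> (nat \<Rightarrow> 'a) \<Rightarrow> (nat \<Rightarrow> 'a)
    \<Rightarrow> (nat \<Rightarrow> 'a) \<Rightarrow> (nat \<Rightarrow> 'a) \<Rightarrow> (nat \<Rightarrow> 'a) \<Rightarrow> (nat \<Rightarrow> 'a) \<Rightarrow> bool" where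
  "is_Urs_rep n r s c e f w w' wI wI' \<longleftrightarrow>
     \<comment> \<open>c is a central unital ring homomorphism (algebra structure)\<close>
     c 1 = 1 \<and> (\<forall>x y. c (x + y) = c x + c y) \<and> (\<forall>x y. c (x * y) = c x * c y) \<and>
     (\<forall>x (a::'a). c x * a = a * c x) \<and>
     (\<forall>i\<in>{1..n}. \<forall>j\<in>{1..n}.
        \<comment> \<open>the omega's commute and are invertible\<close>
        w i * w j = w j * w i \<and> w' i * w' j = w' j * w' i \<and> w i * w' j = w' j * w i \<and>
        w i * wI i = 1 \<and> wI i * w i = 1 \<and> w' i * wI' i = 1 \<and> wI' i * w' i = 1 \<and>
        \<comment> \<open>conjugation relations\<close>
        w j * e i * wI j = c (pairing n r s i j) * e i \<and>
        w j * f i * wI j = c (inverse (pairing n r s i j)) * f i \<and>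
        w' j * e i * wI' j = c (inverse (pairing n r s j i)) * e i \<and>
        w' j * f i * wI' j = c (pairing n r s j i) * f i \<and>
        \<comment> \<open>commutation of e and f\<close>
        e i * f j - f j * e i =
          (if i = j then c (inverse (r_idx n r i - r_idx n s i)) * (w i - w' i) else 0) \<and>
        \<comment> \<open>Serre relations\<close>
        (i \<noteq> j \<longrightarrow>
           (adl e w wI i ^^ nat (1 - cartanB n i j)) (e j) = 0 \<and>
           (adr f w' wI' i ^^ nat (1 - cartanB n i j)) (f j) = 0))"

text \<open>Root vectors. E_aux k i = E_{i,i+k}.\<close>
primrec E_aux :: "(complex \<Rightarrow> 'a::ring_1) \<Rightarrow> complex \<Rightarrow> (nat \<Rightarrow> 'a) \<Rightarrow> nat \<Rightarrow> nat \<Rightarrow> 'a" where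
  "E_aux c r e 0 i = e i"
| "E_aux c r e (Suc k) i = e i * E_aux c r e k (i + 1) - c (r^2) * E_aux c r e k (i + 1) * e i"

definition rootE :: "(complex \<Rightarrow> 'a::ring_1) \<Rightarrow> complex \<Rightarrow> (nat \<Rightarrow> 'a) \<Rightarrow> nat \<Rightarrow> nat \<Rightarrow> 'a" where
  "rootE c r e i j = E_aux c r e (j - i) i"

text \<open>Ep_aux k i = E_{i,(n-k)'}.\<close>
primrec Ep_aux :: "nat \<Rightarrow> (complex \<Rightarrow> 'a::ring_1) \<Rightarrow> complex \<Rightarrow> complex \<Rightarrow> (nat \<Rightarrow> 'a) \<Rightarrow> nat \<Rightarrow> nat \<Rightarrow> 'a" where
  "Ep_aux n c r s e 0 i = rootE c r e i n * e n - c (r * s) * e n * rootE c r e i n"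
| "Ep_aux n c r s e (Suc k) i =
     Ep_aux n c r s e k i * e (n - Suc k) - c (inverse (s^2)) * e (n - Suc k) * Ep_aux n c r s e k i"

definition rootEp :: "nat \<Rightarrow> (complex \<Rightarrow> 'a::ring_1) \<Rightarrow> complex \<Rightarrow> complex \<Rightarrow> (nat \<Rightarrow> 'a) \<Rightarrow> nat \<Rightarrow> nat \<Rightarrow> 'a" where
  "rootEp n c r s e i j = Ep_aux n c r s e (n - j) i"

end

theory Submission
  imports Defs
begin

text \<open>Write [x,y]_q = xy - q yx.  The defining Serre relations of U^+ say that certain nested
  q-commutators of the generators vanish, and the root vectors are themselves iterated
  q-commutators.  Two formal facts then do most of the work: if x and y both q-commute with z
  then [x,y]_p q-commutes with z (the factors multiply), and if x commutes with z then
  [[x,y]_p,z]_q = [x,[y,z]_q]_p.  Peeling off one generator at a time, (1), (3), (4) reduce to the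
  Serre relations.  The one non-formal step is that e_j commutes with E_{i,n} for i < j < n,
  which follows from an explicit identity expressing [e_j, E_{j-1,n}] through two quadratic
  Serre relations.  It lets E_{i,n} be factored out of E_{i,j'}, from which (5) and (2) follow.\<close>

locale central_scalars =
  fixes c :: "complex \<Rightarrow> 'a::ring_1"
  assumes c_1: "c 1 = 1" and c_add: "\<And>x y. c (x + y) = c x + c y"
    and c_mult: "\<And>x y. c (x * y) = c x * c y" and c_central: "\<And>x a. c x * a = a * c x"
begin

lemma c_0: "c 0 = 0"
  using c_add[of 0 0] by simp

lemma c_minus: "c (- x) = - c x"
  by (metis add.right_neutral add_minus_cancel c_0 c_add)

definition scale :: "complex \<Rightarrow> 'a \<Rightarrow> 'a" where
  "scale k x = c k * x"

lemma scale_right: "a * scale k b = scale k (a * b)"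
  unfolding scale_def by (metis c_central mult.assoc)

lemma scale_left: "scale k a * b = scale k (a * b)"
  unfolding scale_def by (simp add: mult.assoc)

lemma scale_scale_mult: "scale k (scale l a) = scale (k * l) a"
  unfolding scale_def by (simp add: c_mult mult.assoc)

lemma scale_add: "scale k (a + b) = scale k a + scale k b"
  and scale_diff: "scale k (a - b) = scale k a - scale k b"
  and scale_minus: "scale k (- a) = - scale k a"
  and scale_0: "scale k 0 = 0"
  unfolding scale_def by (simp_all add: algebra_simps)

lemma scale_add_left: "scale (k + l) a = scale k a + scale l a"
  and scale_minus_left: "scale (- k) a = - scale k a"
  and scale_1: "scale 1 a = a"
  and scale_0_left: "scale 0 a = 0"
  unfolding scale_def by (simp_all add: c_add c_minus c_1 c_0 algebra_simps)

lemma scale_diff_left: "scale (k - l) a = scale k a - scale l a"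
  using scale_add_left[of k "- l" a] by (simp add: scale_minus_left)

lemmas scale_simps = algebra_simps scale_right scale_left scale_scale_mult scale_add scale_diff
  scale_minus scale_0 scale_add_left scale_minus_left scale_diff_left scale_1 scale_0_left

lemma scale_eq_0_iff:
  assumes "k \<noteq> 0"
  shows "scale k x = 0 \<longleftrightarrow> x = 0"
proof
  assume "scale k x = 0"
  then have "scale (inverse k) (scale k x) = 0" by (simp add: scale_0)
  then show "x = 0" using assms by (simp add: scale_scale_mult scale_1)
qed (simp add: scale_0)

definition qcomm :: "complex \<Rightarrow> 'a \<Rightarrow> 'a \<Rightarrow> 'a" where
  "qcomm q x y = x * y - scale q (y * x)"

lemma qcomm_eq_0_iff: "qcomm q x y = 0 \<longleftrightarrow> x * y = scale q (y * x)"
  unfolding qcomm_def by simp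

lemma qcomm_1_eq_0_iff: "qcomm 1 x y = 0 \<longleftrightarrow> x * y = y * x"
  unfolding qcomm_def by (simp add: scale_1)

lemma qcomm_qcomm_same_left: "qcomm p x (qcomm q x y) = qcomm q x (qcomm p x y)"
  unfolding qcomm_def by (simp add: scale_simps mult.commute)

lemma qcomm_assoc:
  assumes "x * z = z * x"
  shows "qcomm q (qcomm p x y) z = qcomm p x (qcomm q y z)"
proof -
  have "x * (z * y) = z * (x * y)" "y * (z * x) = y * (x * z)"
    using assms by (metis mult.assoc)+
  then show ?thesis unfolding qcomm_def by (simp add: scale_simps)
qed

lemma qcomm_mult_left_eq_0:
  assumes "qcomm l x z = 0" "qcomm m y z = 0"
  shows "qcomm (l * m) (x * y) z = 0"
proof -
  have "x * y * z = scale m (x * z * y)"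
    using assms(2) by (simp add: qcomm_eq_0_iff mult.assoc scale_right)
  also have "\<dots> = scale (l * m) (z * (x * y))"
    using assms(1) by (simp add: qcomm_eq_0_iff scale_simps mult.commute)
  finally show ?thesis by (simp add: qcomm_eq_0_iff)
qed

lemma qcomm_mult_right_eq_0:
  assumes "qcomm l z x = 0" "qcomm m z y = 0"
  shows "qcomm (l * m) z (x * y) = 0"
proof -
  have "z * (x * y) = scale l (x * (z * y))"
    using assms(1) by (simp add: qcomm_eq_0_iff scale_left flip: mult.assoc)
  also have "\<dots> = scale (l * m) (x * y * z)"
    using assms(2) by (simp add: qcomm_eq_0_iff scale_simps)
  finally show ?thesis by (simp add: qcomm_eq_0_iff)
qed

lemma qcomm_qcomm_right:
  assumes "qcomm l x z = 0" "qcomm m y z = 0"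
  shows "qcomm (l * m) (qcomm q x y) z = 0"
proof -
  have "qcomm (l * m) (x * y) z = 0" "qcomm (l * m) (y * x) z = 0"
    using qcomm_mult_left_eq_0[OF assms] qcomm_mult_left_eq_0[OF assms(2,1)]
    by (simp_all add: mult.commute)
  then show ?thesis unfolding qcomm_def by (simp add: scale_simps)
qed

lemma qcomm_qcomm_left:
  assumes "qcomm l z x = 0" "qcomm m z y = 0"
  shows "qcomm (l * m) z (qcomm q x y) = 0"
proof -
  have "qcomm (l * m) z (x * y) = 0" "qcomm (l * m) z (y * x) = 0"
    using qcomm_mult_right_eq_0[OF assms] qcomm_mult_right_eq_0[OF assms(2,1)]
    by (simp_all add: mult.commute)
  then show ?thesis unfolding qcomm_def by (simp add: scale_simps)
qed

lemma qcomm_scale_left: "qcomm q (scale k x) y = scale k (qcomm q x y)"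
  and qcomm_scale_right: "qcomm q x (scale k y) = scale k (qcomm q x y)"
  unfolding qcomm_def by (simp_all add: scale_simps mult.commute)

lemma qcomm_swap:
  assumes "q \<noteq> 0"
  shows "qcomm (inverse q) y x = scale (- inverse q) (qcomm q x y)"
  using assms unfolding qcomm_def by (simp add: scale_simps)

lemma qcomm_qcomm_swap_eq_0_iff:
  assumes "p \<noteq> 0" "q \<noteq> 0"
  shows "qcomm (inverse p) y (qcomm (inverse q) y x) = 0 \<longleftrightarrow> qcomm p (qcomm q x y) y = 0"
proof -
  have "qcomm (inverse p) y (qcomm (inverse q) y x)
      = scale (- inverse p * - inverse q) (qcomm p (qcomm q x y) y)"
    by (simp only: qcomm_swap[OF assms(1)] qcomm_swap[OF assms(2)] qcomm_scale_left scale_scale_mult)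
  then show ?thesis using assms by (simp add: scale_eq_0_iff)
qed

lemma commute_qcomm:
  assumes "z * x = x * z" "z * y = y * z"
  shows "z * qcomm q x y = qcomm q x y * z"
  using qcomm_qcomm_left[of 1 z x 1 y q] assms by (simp add: qcomm_1_eq_0_iff)

text \<open>If a and U commute, the commutator of b with [a,[b,U]_R]_R is a combination of the two
  quadratic Serre relations between b and U and between a and b.\<close>

lemma qcomm_qcomm_commutator_identity:
  fixes R S :: complex
  assumes "U * a = a * U"
  shows "scale (R + S) (b * qcomm R a (qcomm R b U) - qcomm R a (qcomm R b U) * b)
    = a * qcomm S b (qcomm R b U) - scale (R^2) (qcomm S b (qcomm R b U) * a)
      + scale (R^2) (U * qcomm S (qcomm R a b) b) - qcomm S (qcomm R a b) b * U"
proof -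
  have "U * (a * w) = a * (U * w)" for w using assms by (metis mult.assoc)
  with assms show ?thesis unfolding qcomm_def by (simp add: scale_simps power2_eq_square)
qed

lemma commute_qcomm_qcomm_of_serre:
  assumes "U * a = a * U" "R + S \<noteq> 0"
    and "qcomm S b (qcomm R b U) = 0" "qcomm S (qcomm R a b) b = 0"
  shows "b * qcomm R a (qcomm R b U) = qcomm R a (qcomm R b U) * b"
  using qcomm_qcomm_commutator_identity[OF assms(1), of R S b] assms(2-4)
  by (simp add: scale_eq_0_iff scale_0)

lemma conj_qcomm:
  assumes "v * w = 1" "w * x * v = scale a x" "w * y * v = scale b y"
  shows "w * qcomm q x y * v = scale (a * b) (qcomm q x y)"
proof -
  have conj_mult: "w * (x' * y') * v = (w * x' * v) * (w * y' * v)" for x' y'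
  proof -
    have "(w * x' * v) * (w * y' * v) = w * x' * (v * w) * y' * v" by (simp only: mult.assoc)
    then show ?thesis using assms(1) by (simp add: mult.assoc)
  qed
  have "w * (x * y) * v = scale (a * b) (x * y)" "w * (y * x) * v = scale (a * b) (y * x)"
    unfolding conj_mult assms(2,3) by (simp_all add: scale_simps mult.commute)
  moreover have "w * scale q z * v = scale q (w * z * v)" for z
    by (simp add: scale_simps)
  ultimately show ?thesis
    unfolding qcomm_def by (simp add: scale_simps)
qed

end

text \<open>The relations of U^+ in the form used below: serre_left and serre_right are
  (ad e_i)^2 e_{i+1} = 0 and (ad e_{i+1})^2 e_i = 0, and serre_cubic is (ad e_n)^3 e_{n-1} = 0,
  each rewritten as the vanishing of a nested q-commutator.\<close>

locale Bn_serre = central_scalars c for c :: "complex \<Rightarrow> 'a::ring_1" +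
  fixes n :: nat and r s :: complex and e :: "nat \<Rightarrow> 'a"
  assumes r_nonzero: "r \<noteq> 0" and s_nonzero: "s \<noteq> 0" and r2_plus_s2_nonzero: "r^2 + s^2 \<noteq> 0"
    and e_commute: "\<And>i j. \<lbrakk>1 \<le> i; i + 2 \<le> j; j \<le> n\<rbrakk> \<Longrightarrow> e i * e j = e j * e i"
    and serre_left: "\<And>i. \<lbrakk>1 \<le> i; i < n\<rbrakk> \<Longrightarrow>
      qcomm (s^2) (e i) (qcomm (r^2) (e i) (e (i + 1))) = 0"
    and serre_right: "\<And>i. \<lbrakk>1 \<le> i; i + 1 < n\<rbrakk> \<Longrightarrow>
      qcomm (s^2) (qcomm (r^2) (e i) (e (i + 1))) (e (i + 1)) = 0"
    and serre_cubic: "qcomm (s^2) (qcomm (r * s) (qcomm (r^2) (e (n - 1)) (e n)) (e n)) (e n) = 0"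
begin

abbreviation "E \<equiv> rootE c r e"
abbreviation "E' \<equiv> rootEp n c r s e"

lemma rootE_same: "E i i = e i"
  unfolding rootE_def by simp

lemma rootE_step:
  assumes "i < j"
  shows "E i j = qcomm (r^2) (e i) (E (i + 1) j)"
proof -
  have "j - i = Suc (j - (i + 1))" using assms by simp
  then show ?thesis unfolding rootE_def qcomm_def scale_def by (simp add: mult.assoc)
qed

lemma rootEp_n: "E' i n = qcomm (r * s) (E i n) (e n)"
  unfolding rootEp_def qcomm_def scale_def by (simp add: mult.assoc)

lemma rootEp_step:
  assumes "j < n"
  shows "E' i j = qcomm (inverse (s^2)) (E' i (j + 1)) (e j)"
proof -
  have "n - j = Suc (n - (j + 1))" "n - Suc (n - (j + 1)) = j" using assms by simp_all
  then show ?thesis unfolding rootEp_def qcomm_def scale_def by (simp only: Ep_aux.simps mult.assoc)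
qed

text \<open>Since E_{i,n} commutes with e_j for i < j < n, it can be pulled out of E_{i,j'}
  (see rootEp_eq_qcomm_tail); what remains is the following element, independent of i.\<close>

primrec rootEp_tail_aux :: "nat \<Rightarrow> 'a" where
  "rootEp_tail_aux 0 = e n"
| "rootEp_tail_aux (Suc k) = qcomm (inverse (s^2)) (rootEp_tail_aux k) (e (n - Suc k))"

definition rootEp_tail :: "nat \<Rightarrow> 'a" where
  "rootEp_tail j = rootEp_tail_aux (n - j)"

lemma rootEp_tail_n: "rootEp_tail n = e n"
  unfolding rootEp_tail_def by simp

lemma rootEp_tail_step:
  assumes "j < n"
  shows "rootEp_tail j = qcomm (inverse (s^2)) (rootEp_tail (j + 1)) (e j)"
proof -
  have "n - j = Suc (n - (j + 1))" "n - Suc (n - (j + 1)) = j" using assms by simp_all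
  then show ?thesis unfolding rootEp_tail_def by (simp only: rootEp_tail_aux.simps)
qed

lemma e_commute_far:
  assumes "1 \<le> i" "i \<le> n" "1 \<le> j" "j \<le> n" "i + 2 \<le> j \<or> j + 2 \<le> i"
  shows "e i * e j = e j * e i"
  using assms e_commute by metis

lemma e_commute_rootE:
  assumes "1 \<le> m" "m \<le> n" "1 \<le> i" "i \<le> j" "j \<le> n" "m + 2 \<le> i \<or> j + 2 \<le> m"
  shows "e m * E i j = E i j * e m"
  using assms(4,1-3,5-)
proof (induction i rule: inc_induct)
  case base
  then show ?case by (simp add: rootE_same e_commute_far)
next
  case (step i)
  have "e m * e i = e i * e m" using step by (intro e_commute_far) auto
  moreover have "e m * E (i + 1) j = E (i + 1) j * e m" using step by auto
  ultimately show ?case using step(2) by (simp add: rootE_step commute_qcomm)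
qed

lemma e_commute_rootEp_tail:
  assumes "1 \<le> m" "m + 2 \<le> j" "j \<le> n"
  shows "e m * rootEp_tail j = rootEp_tail j * e m"
  using assms(3,1,2)
proof (induction j rule: inc_induct)
  case base
  then show ?case by (simp add: rootEp_tail_n e_commute_far)
next
  case (step j)
  then have "e m * e j = e j * e m" by (intro e_commute_far) auto
  with step show ?case by (simp add: rootEp_tail_step commute_qcomm)
qed

lemma qcomm_e_rootE:
  assumes "1 \<le> i" "i < j" "j \<le> n"
  shows "qcomm (s^2) (e i) (E i j) = 0"
proof (cases "j = i + 1")
  case True
  with assms serre_left[of i] show ?thesis by (simp add: rootE_step rootE_same)
next
  case False
  have far: "e i * E (i + 2) j = E (i + 2) j * e i"
    using assms False by (intro e_commute_rootE) auto
  have "E i j = qcomm (r^2) (e i) (qcomm (r^2) (e (i + 1)) (E (i + 2) j))"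
    using assms False by (simp add: rootE_step)
  also have "\<dots> = qcomm (r^2) (qcomm (r^2) (e i) (e (i + 1))) (E (i + 2) j)"
    using far by (simp add: qcomm_assoc)
  finally show ?thesis
    using qcomm_qcomm_left[OF serre_left qcomm_1_eq_0_iff[THEN iffD2, OF far]] assms by simp
qed

lemma qcomm_rootE_e:
  assumes "1 \<le> i" "i < j" "j < n"
  shows "qcomm (s^2) (E i j) (e j) = 0"
proof -
  have "i \<le> j - 1" using assms by simp
  then show ?thesis using assms
  proof (induction i rule: inc_induct)
    case base
    then show ?case using serre_right[of "j - 1"] by (simp add: rootE_step rootE_same)
  next
    case (step i)
    then have "e i * e j = e j * e i" by (intro e_commute_far) auto
    then have "qcomm 1 (e i) (e j) = 0" by (simp add: qcomm_1_eq_0_iff)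
    from qcomm_qcomm_right[OF this step.IH] step show ?case by (simp add: rootE_step)
  qed
qed

lemma e_commute_rootE_n:
  assumes "1 \<le> i" "i < j" "j < n"
  shows "e j * E i n = E i n * e j"
proof -
  have "i \<le> j - 1" using assms by simp
  then show ?thesis using assms
  proof (induction i rule: inc_induct)
    case base
    let ?U = "E (j + 1) n"
    have "?U * e (j - 1) = e (j - 1) * ?U"
      using base by (intro e_commute_rootE[symmetric]) auto
    moreover have "qcomm (s^2) (e j) (qcomm (r^2) (e j) ?U) = 0"
      using qcomm_e_rootE[of j n] base by (simp add: rootE_step)
    moreover have "qcomm (s^2) (qcomm (r^2) (e (j - 1)) (e j)) (e j) = 0"
      using serre_right[of "j - 1"] base by simp
    ultimately have "e j * qcomm (r^2) (e (j - 1)) (qcomm (r^2) (e j) ?U)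
        = qcomm (r^2) (e (j - 1)) (qcomm (r^2) (e j) ?U) * e j"
      using r2_plus_s2_nonzero by (intro commute_qcomm_qcomm_of_serre)
    with base show ?case by (simp add: rootE_step)
  next
    case (step i)
    then have "e j * e i = e i * e j" by (intro e_commute_far) auto
    with step show ?case by (simp add: rootE_step commute_qcomm)
  qed
qed

lemma rootEp_eq_qcomm_tail:
  assumes "1 \<le> i" "i < j" "j \<le> n"
  shows "E' i j = qcomm (r * s) (E i n) (rootEp_tail j)"
  using assms(3,1,2)
proof (induction j rule: inc_induct)
  case base
  then show ?case by (simp add: rootEp_n rootEp_tail_n)
next
  case (step j)
  have "E i n * e j = e j * E i n"
    using e_commute_rootE_n[of i j] step by simp
  with step show ?case by (simp add: rootEp_step rootEp_tail_step qcomm_assoc)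
qed

lemma qcomm_rootEp_tail_e:
  assumes "1 \<le> j" "j < n"
  shows "qcomm (inverse (r^2)) (rootEp_tail j) (e j) = 0"
proof -
  have swapped: "qcomm (inverse (r^2)) (qcomm (inverse (s^2)) (e (j + 1)) (e j)) (e j) = 0"
    using serre_left[OF assms] r_nonzero s_nonzero
      qcomm_qcomm_swap_eq_0_iff[of "inverse (r^2)" "inverse (s^2)" "e j" "e (j + 1)"]
    by (simp add: qcomm_qcomm_same_left)
  show ?thesis
  proof (cases "j + 1 = n")
    case True
    with swapped assms show ?thesis by (simp add: rootEp_tail_step rootEp_tail_n)
  next
    case False
    have far: "rootEp_tail (j + 2) * e j = e j * rootEp_tail (j + 2)"
      using assms False by (intro e_commute_rootEp_tail[symmetric]) auto
    have "rootEp_tail j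
        = qcomm (inverse (s^2)) (qcomm (inverse (s^2)) (rootEp_tail (j + 2)) (e (j + 1))) (e j)"
      using assms False by (simp add: rootEp_tail_step)
    also have "\<dots>
        = qcomm (inverse (s^2)) (rootEp_tail (j + 2)) (qcomm (inverse (s^2)) (e (j + 1)) (e j))"
      using far by (simp add: qcomm_assoc)
    finally show ?thesis
      using qcomm_qcomm_right[OF qcomm_1_eq_0_iff[THEN iffD2, OF far] swapped] by simp
  qed
qed

lemma qcomm_e_rootEp:
  assumes "1 \<le> i" "i + 1 < j" "j \<le> n"
  shows "qcomm (s^2) (e i) (E' i j) = 0"
proof -
  have "qcomm 1 (e i) (rootEp_tail j) = 0"
    using assms by (simp add: qcomm_1_eq_0_iff e_commute_rootEp_tail)
  from qcomm_qcomm_left[OF qcomm_e_rootE this] assms show ?thesis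
    by (simp add: rootEp_eq_qcomm_tail)
qed

lemma qcomm_rootEp_e:
  assumes "1 \<le> i" "i < j" "j < n"
  shows "qcomm (inverse (r^2)) (E' i j) (e j) = 0"
proof -
  have "qcomm 1 (E i n) (e j) = 0"
    using e_commute_rootE_n[OF assms] by (simp add: qcomm_1_eq_0_iff)
  from qcomm_qcomm_right[OF this qcomm_rootEp_tail_e] assms show ?thesis
    by (simp add: rootEp_eq_qcomm_tail)
qed

lemma qcomm_rootEp_n_e:
  assumes "1 \<le> i" "i < n"
  shows "qcomm (s^2) (E' i n) (e n) = 0"
proof -
  have "i \<le> n - 1" using assms by simp
  then show ?thesis using assms
  proof (induction i rule: inc_induct)
    case base
    then show ?case using serre_cubic by (simp add: rootEp_n rootE_step rootE_same)
  next
    case (step i)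
    then have commute: "e i * e n = e n * e i" by (intro e_commute_far) auto
    then have "E' i n = qcomm (r^2) (e i) (E' (i + 1) n)"
      using step by (simp add: rootEp_n rootE_step qcomm_assoc)
    with qcomm_qcomm_right[OF qcomm_1_eq_0_iff[THEN iffD2, OF commute] step.IH] step show ?case
      by simp
  qed
qed

end

locale Urs_rep =
  fixes n :: nat and r s :: complex and c :: "complex \<Rightarrow> 'a::ring_1"
    and e f w w' wI wI' :: "nat \<Rightarrow> 'a"
  assumes rep: "is_Urs_rep n r s c e f w w' wI wI'"
    and n_ge_2: "n \<ge> 2" and r_ne_0: "r \<noteq> 0" and s_ne_0: "s \<noteq> 0" and r4_ne_s4: "r^4 \<noteq> s^4"

sublocale Urs_rep \<subseteq> central_scalars c
proof -
  from rep[unfolded is_Urs_rep_def]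
  have "c 1 = 1 \<and> (\<forall>x y. c (x + y) = c x + c y) \<and> (\<forall>x y. c (x * y) = c x * c y)
      \<and> (\<forall>x a. c x * a = a * c x)"
    by (elim conjE) (intro conjI)
  then show "central_scalars c" by unfold_locales blast+
qed

context Urs_rep
begin

lemma w_inverse: "i \<in> {1..n} \<Longrightarrow> wI i * w i = 1"
  using rep unfolding is_Urs_rep_def by blast

lemma conj_e:
  "i \<in> {1..n} \<Longrightarrow> j \<in> {1..n} \<Longrightarrow> w i * e j * wI i = scale (pairing n r s j i) (e j)"
  using rep unfolding is_Urs_rep_def scale_def by blast

lemma serre_adl:
  "i \<in> {1..n} \<Longrightarrow> j \<in> {1..n} \<Longrightarrow> i \<noteq> j \<Longrightarrow>
    (adl e w wI i ^^ nat (1 - cartanB n i j)) (e j) = 0"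
  using rep unfolding is_Urs_rep_def by blast

lemma adl_eigen:
  assumes "i \<in> {1..n}" "w i * y * wI i = scale p y"
  shows "adl e w wI i y = qcomm p (e i) y"
    and "w i * qcomm p (e i) y * wI i = scale (pairing n r s i i * p) (qcomm p (e i) y)"
  using assms conj_qcomm[OF w_inverse conj_e] unfolding adl_def qcomm_def
  by (simp_all add: scale_left)

lemma adl_e_commute:
  assumes "1 \<le> i" "i + 2 \<le> j" "j \<le> n"
  shows "e i * e j = e j * e i"
proof -
  have "nat (1 - cartanB n i j) = 1" "pairing n r s j i = 1"
    using assms unfolding cartanB_def pairing_def by auto
  with assms serre_adl[of i j] adl_eigen(1)[OF _ conj_e, of i j] show ?thesis
    by (simp add: qcomm_1_eq_0_iff)
qed

lemma adl_serre_left: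
  assumes "1 \<le> i" "i < n"
  shows "qcomm (s^2) (e i) (qcomm (r^2) (e i) (e (i + 1))) = 0"
proof -
  have ij: "i \<in> {1..n}" "i + 1 \<in> {1..n}" using assms by auto
  have "nat (1 - cartanB n i (i + 1)) = 2"
    using assms unfolding cartanB_def by auto
  then have "adl e w wI i (adl e w wI i (e (i + 1))) = 0"
    using serre_adl[OF ij] by (simp add: numeral_2_eq_2)
  moreover have "pairing n r s (i + 1) i = s^2" "pairing n r s i i * s^2 = r^2"
    using assms s_ne_0 unfolding pairing_def by auto
  ultimately have "qcomm (r^2) (e i) (qcomm (s^2) (e i) (e (i + 1))) = 0"
    using adl_eigen[OF ij(1) conj_e[OF ij]] adl_eigen(1)[OF ij(1)] by simp
  then show ?thesis by (simp add: qcomm_qcomm_same_left)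
qed

lemma adl_serre_right:
  assumes "1 \<le> i" "i + 1 < n"
  shows "qcomm (s^2) (qcomm (r^2) (e i) (e (i + 1))) (e (i + 1)) = 0"
proof -
  have ij: "i + 1 \<in> {1..n}" "i \<in> {1..n}" using assms by auto
  have "nat (1 - cartanB n (i + 1) i) = 2"
    using assms unfolding cartanB_def by auto
  then have "adl e w wI (i + 1) (adl e w wI (i + 1) (e i)) = 0"
    using serre_adl[OF ij] by (simp add: numeral_2_eq_2)
  moreover have "pairing n r s i (i + 1) = inverse (r^2)"
      "pairing n r s (i + 1) (i + 1) * inverse (r^2) = inverse (s^2)"
    using assms r_ne_0 unfolding pairing_def by auto
  ultimately have "qcomm (inverse (s^2)) (e (i + 1)) (qcomm (inverse (r^2)) (e (i + 1)) (e i)) = 0"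
    using adl_eigen[OF ij(1) conj_e[OF ij]] adl_eigen(1)[OF ij(1)] by simp
  then show ?thesis using r_ne_0 s_ne_0 by (simp add: qcomm_qcomm_swap_eq_0_iff)
qed

lemma adl_serre_cubic:
  "qcomm (s^2) (qcomm (r * s) (qcomm (r^2) (e (n - 1)) (e n)) (e n)) (e n) = 0"
proof -
  have ij: "n \<in> {1..n}" "n - 1 \<in> {1..n}" using n_ge_2 by auto
  have "nat (1 - cartanB n n (n - 1)) = 3"
    using n_ge_2 unfolding cartanB_def by auto
  then have "adl e w wI n (adl e w wI n (adl e w wI n (e (n - 1)))) = 0"
    using serre_adl[OF ij] n_ge_2 by (simp add: numeral_3_eq_3)
  moreover have "pairing n r s (n - 1) n = inverse (r^2)"
      "pairing n r s n n * inverse (r^2) = inverse (r * s)"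
      "pairing n r s n n * inverse (r * s) = inverse (s^2)"
    using n_ge_2 r_ne_0 s_ne_0 unfolding pairing_def by (auto simp: field_simps power2_eq_square)
  ultimately have "qcomm (inverse (s^2)) (e n) (qcomm (inverse (r * s)) (e n)
      (qcomm (inverse (r^2)) (e n) (e (n - 1)))) = 0"
    using adl_eigen[OF ij(1) conj_e[OF ij]] adl_eigen[OF ij(1)] by simp
  then have "qcomm (inverse (s^2)) (e n) (qcomm (inverse (r * s)) (e n)
      (qcomm (r^2) (e (n - 1)) (e n))) = 0"
    using r_ne_0 by (simp add: qcomm_swap qcomm_scale_right scale_eq_0_iff)
  then show ?thesis using qcomm_qcomm_swap_eq_0_iff[of "s^2" "r * s"] r_ne_0 s_ne_0 by simp
qed

end

sublocale Urs_rep \<subseteq> Bn_serre c n r s e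
proof
  have "(r^2)^2 \<noteq> (s^2)^2" using r4_ne_s4 by (simp flip: power_mult)
  then show "r^2 + s^2 \<noteq> 0" by (auto simp: power2_eq_square add_eq_0_iff)
qed (use r_ne_0 s_ne_0 adl_e_commute adl_serre_left adl_serre_right adl_serre_cubic in auto)

theorem lemma3p2:
  fixes n :: nat and r s :: complex and c :: "complex \<Rightarrow> 'a::ring_1"
    and e f w w' wI wI' :: "nat \<Rightarrow> 'a"
  assumes "n \<ge> 2"
    and "r \<noteq> 0" "s \<noteq> 0" "r^3 \<noteq> s^3" "r^4 \<noteq> s^4"
    and "is_Urs_rep n r s c e f w w' wI wI'"
  shows "(\<forall>i j. 1 \<le> i \<and> i < j \<and> j \<le> n \<longrightarrow>
            e i * rootE c r e i j = c (s^2) * rootE c r e i j * e i)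
       \<and> (\<forall>i j. 1 \<le> i \<and> i + 1 < j \<and> j \<le> n \<longrightarrow>
            e i * rootEp n c r s e i j = c (s^2) * rootEp n c r s e i j * e i)
       \<and> (\<forall>i j. 1 \<le> i \<and> i < j \<and> j < n \<longrightarrow>
            rootE c r e i j * e j = c (s^2) * e j * rootE c r e i j)
       \<and> (\<forall>i. 1 \<le> i \<and> i < n \<longrightarrow>
            rootEp n c r s e i n * e n = c (s^2) * e n * rootEp n c r s e i n)
       \<and> (\<forall>i j. 1 \<le> i \<and> i < j \<and> j < n \<longrightarrow>
            rootEp n c r s e i j * e j = c (inverse (r^2)) * e j * rootEp n c r s e i j)"
proof -
  interpret Urs_rep n r s c e f w w' wI wI'
    using assms by unfold_locales
  have commute: "x * y = c q * y * x" if "qcomm q x y = 0" for q x y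
    using that by (simp add: qcomm_eq_0_iff scale_def mult.assoc)
  show ?thesis
    by (auto intro!: commute qcomm_e_rootE qcomm_e_rootEp qcomm_rootE_e qcomm_rootEp_n_e qcomm_rootEp_e)
qed

end
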